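(* For positive integers $m,n$, the series $$S_{m,n}=\sum_{\substack{i\ge1\\ m\mid i}}\ \sum_{\substack{j\ge1\\ mn\mid ij}}\frac{\mu(j)}{i^2j\,\varphi(ij)}$$ converges and equals $$S_{m,n}=\frac{S}{m^3n^3}\prod_{p\mid n}\frac{-p^4}{p^3-p-1}\prod_{\substack{p\mid m\\ p\nmid n}}\frac{p^3+p^2}{p^3-p-1},$$ where $S=\prod_{p\text{ prime}}\bigl(1-\frac{p}{p^3-1}\bigr)$ and products are over primes $p$.
   Context: $\mu$ is the Möbius function and $\varphi$ Euler's totient function. *)

theory Defs
  imports "HOL-Analysis.Analysis" "HOL-Number_Theory.Number_Theory" "HOL-Computational_Algebra.Squarefree"
begin

text \<open>Moebius function: mu(n) = (-1)^(number of prime factors) if n >= 1 is squarefree, else 0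
  (and mu(0) = 0 by convention; 0 never occurs in the sums below).\<close>
definition moebius_mu :: "nat \<Rightarrow> real" where
  "moebius_mu n = (if n > 0 \<and> squarefree n then (-1) ^ card (prime_factors n) else 0)"

definition S_const :: real where
  "S_const = (\<Prod>k. if prime k then 1 - real k / (real k ^ 3 - 1) else 1)"

end

theory Submission
  imports Defs
begin

text \<open>
  The summand f(i, j) = [m dvd i] [m n dvd i j] mu(j) / (i^2 j phi(i j)) is multiplicative in the
  pair (i, j): it is the product over all primes p of a local factor that depends only on the
  exponents of p in i and j.  The local factors are absolutely summable with sums 1 + O(p^-2), so
  the double series equals the Euler product of the local sums.  Since mu(p^b) = 0 for b >= 2,
  each local sum consists of two geometric series in p^-3.  For p not dividing m n it is
  1 - p/(p^3 - 1), the factor of S at p; for p dividing m n it is that factor times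
  p^(-3 v_p(m n)) times -p^4/(p^3 - p - 1) or (p^3 + p^2)/(p^3 - p - 1), according as p divides n
  or not.
\<close>

section \<open>Sums of real families\<close>

lemma has_sum_mult_Times:
  fixes f g :: "_ \<Rightarrow> real"
  assumes f: "(f has_sum a) A" and g: "(g has_sum b) B"
  shows "((\<lambda>(x, y). f x * g y) has_sum (a * b)) (A \<times> B)"
proof -
  have f_abs: "(\<lambda>x. norm (f x)) summable_on A" and g_abs: "(\<lambda>y. norm (g y)) summable_on B"
    using f g summable_on_iff_abs_summable_on_real summable_on_def by blast+
  have "(\<lambda>z. norm ((\<lambda>(x, y). f x * g y) z)) summable_on (A \<times> B)"
  proof (subst Infinite_Sum.abs_summable_on_Sigma_iff, intro conjI ballI)
    fix x
    show "(\<lambda>y. norm (case (x, y) of (x, y) \<Rightarrow> f x * g y)) summable_on B"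
      using summable_on_cmult_right[OF g_abs, of "\<bar>f x\<bar>"] by (simp add: abs_mult)
  next
    show "(\<lambda>x. norm (\<Sum>\<^sub>\<infinity>y\<in>B. norm (case (x, y) of (x, y) \<Rightarrow> f x * g y))) summable_on A"
      using summable_on_cmult_left[OF f_abs, of "\<Sum>\<^sub>\<infinity>y\<in>B. \<bar>g y\<bar>"]
      by (simp add: abs_mult infsum_cmult_right' infsum_nonneg)
  qed
  then obtain c where c: "((\<lambda>(x, y). f x * g y) has_sum c) (A \<times> B)"
    using summable_on_iff_abs_summable_on_real summable_on_def by blast
  have "((\<lambda>x. f x * b) has_sum c) A"
    by (rule has_sum_Sigma'[OF c]) (use has_sum_cmult_right[OF g] in auto)
  then have "c = a * b"
    using has_sum_cmult_left[OF f] has_sum_unique by blast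
  with c show ?thesis by simp
qed

lemma has_sum_geometric_from:
  fixes x :: real
  assumes "\<bar>x\<bar> < 1"
  shows "((\<lambda>a. x ^ a) has_sum (x ^ k / (1 - x))) {k..}"
proof -
  have "((\<lambda>a. x ^ a) has_sum (1 / (1 - x))) UNIV"
    using assms by (intro norm_summable_imp_has_sum geometric_sums summable_geometric) (auto simp: power_abs)
  then have "((\<lambda>a. x ^ k * x ^ a) has_sum (x ^ k * (1 / (1 - x)))) UNIV"
    by (rule has_sum_cmult_right)
  also have "?this \<longleftrightarrow> ((\<lambda>a. x ^ a) has_sum (x ^ k / (1 - x))) {k..}"
    by (intro has_sum_reindex_bij_witness[of _ "\<lambda>a. a - k" "\<lambda>a. a + k"]) (auto simp: power_add)
  finally show ?thesis .
qed

lemma has_sum_extend_zero_from: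
  fixes f :: "nat \<Rightarrow> real"
  assumes "(f has_sum s) {k..}"
  shows "((\<lambda>a. if k \<le> a then f a else 0) has_sum s) UNIV"
  using assms by (rule has_sum_cong_neutral[THEN iffD1, rotated -1]) auto

lemma has_sum_two_rows:
  fixes g :: "nat \<Rightarrow> nat \<Rightarrow> real"
  assumes "\<And>a b. b \<ge> 2 \<Longrightarrow> g a b = 0"
    and "((\<lambda>a. g a 0) has_sum s0) UNIV" and "((\<lambda>a. g a 1) has_sum s1) UNIV"
  shows "((\<lambda>(a, b). g a b) has_sum (s0 + s1)) UNIV"
proof -
  have "inj (\<lambda>a::nat. (a, b::nat))" for b by (auto simp: inj_on_def)
  then have row: "((\<lambda>(a, b). g a b) has_sum s) (range (\<lambda>a. (a, b)))"
    if "((\<lambda>a. g a b) has_sum s) UNIV" for b s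
    using that by (subst has_sum_reindex) (simp_all add: o_def)
  have "((\<lambda>(a, b). g a b) has_sum (s0 + s1)) (range (\<lambda>a. (a, 0)) \<union> range (\<lambda>a. (a, 1)))"
    using assms(2,3) by (intro has_sum_Un_disjoint row) auto
  also have "?this \<longleftrightarrow> ?thesis"
    by (intro has_sum_cong_neutral) (auto simp: image_iff intro!: assms(1))
  finally show ?thesis .
qed

lemma tendsto_infsum_exhaustion:
  fixes f :: "'a \<Rightarrow> real" and S :: "nat \<Rightarrow> 'a set"
  assumes f: "f summable_on A"
    and S: "mono S" "\<And>k. S k \<subseteq> A" "\<And>x. x \<in> A \<Longrightarrow> \<exists>k. x \<in> S k"
  shows "(\<lambda>k. infsum f (S k)) \<longlonglongrightarrow> infsum f A"
proof (rule LIMSEQ_I)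
  fix r :: real
  assume "r > 0"
  have f_abs: "(\<lambda>x. \<bar>f x\<bar>) summable_on A"
    using f summable_on_iff_abs_summable_on_real by force
  obtain X where X: "finite X" "X \<subseteq> A"
    and close: "dist (\<Sum>x\<in>X. \<bar>f x\<bar>) (\<Sum>\<^sub>\<infinity>x\<in>A. \<bar>f x\<bar>) \<le> r / 2"
    using infsum_finite_approximation[OF f_abs, of "r / 2"] \<open>r > 0\<close> by auto
  have "\<forall>x\<in>X. eventually (\<lambda>k. x \<in> S k) sequentially"
    using S X by (metis eventually_sequentially monoD subsetD)
  then have "eventually (\<lambda>k. \<forall>x\<in>X. x \<in> S k) sequentially"
    by (rule eventually_ball_finite[OF X(1)])
  then obtain k0 where k0: "\<And>k. k \<ge> k0 \<Longrightarrow> X \<subseteq> S k"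
    by (auto simp: eventually_sequentially)
  show "\<exists>k0. \<forall>k\<ge>k0. norm (infsum f (S k) - infsum f A) < r"
  proof (intro exI allI impI)
    fix k
    assume "k \<ge> k0"
    have "infsum f A = infsum f (S k) + infsum f (A - S k)"
      using infsum_Un_disjoint[of f "S k" "A - S k"] S(2)[of k]
        summable_on_subset_banach[OF f] by (simp add: Un_absorb1)
    then have "norm (infsum f (S k) - infsum f A) = norm (infsum f (A - S k))"
      by simp
    also have "\<dots> \<le> (\<Sum>\<^sub>\<infinity>x\<in>A - S k. \<bar>f x\<bar>)"
      using norm_infsum_bound[of f "A - S k"] summable_on_subset_banach[OF f_abs, of "A - S k"]
      by simp
    also have "\<dots> \<le> (\<Sum>\<^sub>\<infinity>x\<in>A - X. \<bar>f x\<bar>)"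
      using k0[OF \<open>k \<ge> k0\<close>] summable_on_subset_banach[OF f_abs] by (intro infsum_mono2) auto
    also have "\<dots> = (\<Sum>\<^sub>\<infinity>x\<in>A. \<bar>f x\<bar>) - (\<Sum>x\<in>X. \<bar>f x\<bar>)"
      using infsum_Un_disjoint[of "\<lambda>x. \<bar>f x\<bar>" X "A - X"] X
        summable_on_subset_banach[OF f_abs, of "A - X"] by (simp add: Un_absorb1)
    also have "\<dots> < r"
      using close \<open>r > 0\<close> unfolding dist_real_def by linarith
    finally show "norm (infsum f (S k) - infsum f A) < r" .
  qed
qed

lemma prod_le_exp_suminf:
  fixes e u :: "nat \<Rightarrow> real"
  assumes "finite A" "\<And>k. k \<in> A \<Longrightarrow> 0 \<le> e k \<and> e k \<le> 1 + u k"
    and "summable u" "\<And>k. u k \<ge> 0"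
  shows "(\<Prod>k\<in>A. e k) \<le> exp (suminf u)"
proof -
  have "(\<Prod>k\<in>A. e k) \<le> (\<Prod>k\<in>A. exp (u k))"
    using assms(2) by (intro prod_mono) (smt (verit) exp_ge_add_one_self)
  also have "\<dots> = exp (\<Sum>k\<in>A. u k)"
    using assms(1) by (simp add: exp_sum)
  also have "\<dots> \<le> exp (suminf u)"
    using sum_le_suminf[OF assms(3,1)] assms(4) by simp
  finally show ?thesis .
qed

section \<open>Euler products over pairs of positive integers\<close>

definition smooth_numbers :: "nat \<Rightarrow> nat set" where
  "smooth_numbers B = {k. k > 0 \<and> prime_factors k \<subseteq> {..B}}"

lemma smooth_numbers_0: "smooth_numbers 0 = {1}"
proof -
  have "k = 1" if "k > 0" "prime_factors k \<subseteq> {..0}" for k :: nat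
  proof -
    have "prime_factors k = {}"
    proof (intro equals0I)
      fix p assume "p \<in> prime_factors k"
      then have "prime p" "p = 0" using that(2) by auto
      then show False by simp
    qed
    then show "k = 1"
      using prime_factorization_nat[OF that(1)] by simp
  qed
  then show ?thesis
    unfolding smooth_numbers_def by auto
qed

lemma smooth_numbers_Suc_nonprime:
  assumes "\<not> prime (Suc B)"
  shows "smooth_numbers (Suc B) = smooth_numbers B"
proof -
  have "prime_factors k \<subseteq> {..Suc B} \<longleftrightarrow> prime_factors k \<subseteq> {..B}" for k
    using assms by (auto simp: subset_iff le_Suc_eq)
  then show ?thesis
    by (simp add: smooth_numbers_def)
qed

lemma smooth_numbers_mono: "mono smooth_numbers"
  by (rule monoI) (auto simp: smooth_numbers_def)

lemma mem_smooth_numbers: "k > 0 \<Longrightarrow> k \<le> B \<Longrightarrow> k \<in> smooth_numbers B"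
  by (auto simp: smooth_numbers_def prime_factors_dvd dest!: dvd_imp_le)

lemma eventually_subset_smooth_pairs:
  assumes "finite X" "X \<subseteq> {(i, j). i > 0 \<and> j > 0}"
  shows "eventually (\<lambda>B. X \<subseteq> smooth_numbers B \<times> smooth_numbers B) sequentially"
proof -
  have "\<forall>x\<in>X. eventually (\<lambda>B. x \<in> smooth_numbers B \<times> smooth_numbers B) sequentially"
    using assms(2) eventually_ge_at_top[of "max _ _"]
    by (fastforce elim: eventually_mono intro: mem_smooth_numbers)
  then have "eventually (\<lambda>B. \<forall>x\<in>X. x \<in> smooth_numbers B \<times> smooth_numbers B) sequentially"
    by (rule eventually_ball_finite[OF assms(1)])
  then show ?thesis
    by (simp only: subset_eq)
qed

lemma not_dvd_smooth_numbers:
  "k \<in> smooth_numbers B \<Longrightarrow> prime q \<Longrightarrow> q > B \<Longrightarrow> \<not> q dvd k"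
  by (auto simp: smooth_numbers_def prime_factors_dvd)

lemma multiplicity_prime_power_times:
  fixes q k :: nat
  assumes "prime q" "\<not> q dvd k"
  shows "multiplicity q (q ^ a * k) = a"
  using assms by (intro multiplicity_decomposeI[of _ _ _ k]) auto

lemma multiplicity_other_prime_power_times:
  fixes p q k :: nat
  assumes "prime p" "prime q" "p \<noteq> q"
  shows "multiplicity p (q ^ a * k) = multiplicity p k"
proof -
  have "\<not> p dvd q ^ a"
    using assms prime_dvd_power primes_dvd_imp_eq by blast
  then show ?thesis
    using assms by (intro multiplicity_prime_elem_times_other) auto
qed

lemma bij_betw_smooth_numbers_Suc_prime:
  assumes q: "prime (Suc B)"
  shows "bij_betw (\<lambda>(a, k). Suc B ^ a * k) (UNIV \<times> smooth_numbers B) (smooth_numbers (Suc B))"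
proof -
  let ?q = "Suc B"
  have not_dvd: "\<not> ?q dvd k" if "k \<in> smooth_numbers B" for k
    using that q by (rule not_dvd_smooth_numbers) simp
  have "inj_on (\<lambda>(a, k). ?q ^ a * k) (UNIV \<times> smooth_numbers B)"
  proof (rule inj_onI, clarify)
    fix a b k l
    assume kl: "k \<in> smooth_numbers B" "l \<in> smooth_numbers B" and eq: "?q ^ a * k = ?q ^ b * l"
    have "a = b"
      using multiplicity_prime_power_times[OF q not_dvd[OF kl(1)], of a]
        multiplicity_prime_power_times[OF q not_dvd[OF kl(2)], of b] eq by simp
    with eq show "a = b \<and> k = l" by simp
  qed
  moreover have "(\<lambda>(a, k). ?q ^ a * k) ` (UNIV \<times> smooth_numbers B) = smooth_numbers (Suc B)"
  proof (intro equalityI subsetI)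
    fix x assume "x \<in> (\<lambda>(a, k). ?q ^ a * k) ` (UNIV \<times> smooth_numbers B)"
    then obtain a k where x: "x = ?q ^ a * k" and k: "k \<in> smooth_numbers B"
      by auto
    have "prime_factors (?q ^ a) \<subseteq> {?q}"
      using q by (cases "a = 0") (auto simp: prime_factors_power prime_prime_factors)
    moreover have "prime_factors (?q ^ a * k) = prime_factors (?q ^ a) \<union> prime_factors k"
      using k by (intro prime_factors_product) (auto simp: smooth_numbers_def)
    ultimately show "x \<in> smooth_numbers (Suc B)"
      using k q by (auto simp: x smooth_numbers_def prime_gt_0_nat)
  next
    fix k assume k: "k \<in> smooth_numbers (Suc B)"
    then have "k \<noteq> 0" by (simp add: smooth_numbers_def)
    then obtain k' where k_eq: "k = ?q ^ multiplicity ?q k * k'" and "\<not> ?q dvd k'"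
      using multiplicity_decompose' q by (metis not_prime_unit)
    then have "k' dvd k" "k' \<noteq> 0"
      using \<open>k \<noteq> 0\<close> by (metis dvd_triv_right, metis mult_0_right)
    then have "prime_factors k' \<subseteq> prime_factors k"
      using \<open>k \<noteq> 0\<close> by (intro dvd_prime_factors)
    moreover have "?q \<notin> prime_factors k'"
      using \<open>\<not> ?q dvd k'\<close> by auto
    ultimately have "k' \<in> smooth_numbers B"
      using k \<open>k' \<noteq> 0\<close> by (auto simp: smooth_numbers_def le_Suc_eq)
    with k_eq show "k \<in> (\<lambda>(a, k). ?q ^ a * k) ` (UNIV \<times> smooth_numbers B)"
      by (intro image_eqI[where x = "(multiplicity ?q k, k')"]) auto
  qed
  ultimately show ?thesis
    by (simp add: bij_betw_def)
qed

lemma has_sum_euler_product_smooth: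
  fixes h :: "nat \<Rightarrow> nat \<Rightarrow> nat \<Rightarrow> real"
  assumes local_sum: "\<And>p. prime p \<Longrightarrow> ((\<lambda>(a, b). h p a b) has_sum E p) UNIV"
  shows "((\<lambda>(i, j). \<Prod>p | prime p \<and> p \<le> B. h p (multiplicity p i) (multiplicity p j))
           has_sum (\<Prod>p | prime p \<and> p \<le> B. E p)) (smooth_numbers B \<times> smooth_numbers B)"
proof (induction B)
  case 0
  have no_primes: "{p. prime p \<and> p \<le> (0::nat)} = {}"
    by (auto dest: prime_gt_0_nat)
  show ?case
    unfolding no_primes smooth_numbers_0 by (simp add: has_sum_finiteI)
next
  case (Suc B)
  let ?q = "Suc B" and ?S = "smooth_numbers B"
  let ?F = "\<lambda>B (i, j). \<Prod>p | prime p \<and> p \<le> B. h p (multiplicity p i) (multiplicity p j)"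
  show ?case
  proof (cases "prime ?q")
    case False
    then have "{p. prime p \<and> p \<le> Suc B} = {p. prime p \<and> p \<le> B}"
      by (auto simp: le_Suc_eq)
    with Suc.IH False show ?thesis
      by (simp add: smooth_numbers_Suc_nonprime)
  next
    case True
    have primes: "{p. prime p \<and> p \<le> Suc B} = insert ?q {p. prime p \<and> p \<le> B}"
      using True by (auto simp: le_Suc_eq)
    define \<psi> where "\<psi> = (\<lambda>((a, b), (i, j)). (?q ^ a * i, ?q ^ b * j))"
    have "bij_betw (\<lambda>((a, b), (i, j)). ((a, i), (b, j)))
            (UNIV \<times> (?S \<times> ?S)) ((UNIV \<times> ?S) \<times> (UNIV \<times> ?S))"
      by (rule bij_betw_byWitness[where f' = "\<lambda>((a, i), (b, j)). ((a, b), (i, j))"]) auto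
    from bij_betw_trans[OF this bij_betw_map_prod[OF bij_betw_smooth_numbers_Suc_prime[OF True]
          bij_betw_smooth_numbers_Suc_prime[OF True]]]
    have bij: "bij_betw \<psi> (UNIV \<times> (?S \<times> ?S)) (smooth_numbers ?q \<times> smooth_numbers ?q)"
      by (simp add: \<psi>_def o_def case_prod_beta')
    have factor: "?F ?q (\<psi> ((a, b), (i, j))) = h ?q a b * ?F B (i, j)" if "(i, j) \<in> ?S \<times> ?S" for a b i j
    proof -
      have "\<not> ?q dvd i" "\<not> ?q dvd j"
        using that True not_dvd_smooth_numbers[of _ B ?q] by auto
      then show ?thesis
        using True unfolding \<psi>_def primes
        by (subst prod.insert) (auto simp: multiplicity_prime_power_times multiplicity_other_prime_power_times
          intro!: prod.cong)
    qed
    have "((\<lambda>((a, b), (i, j)). h ?q a b * ?F B (i, j)) has_sum (E ?q * (\<Prod>p | prime p \<and> p \<le> B. E p)))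
            (UNIV \<times> (?S \<times> ?S))"
      using has_sum_mult_Times[OF local_sum[OF True] Suc.IH] by (simp add: case_prod_beta')
    then have "((\<lambda>x. ?F ?q (\<psi> x)) has_sum (E ?q * (\<Prod>p | prime p \<and> p \<le> B. E p))) (UNIV \<times> (?S \<times> ?S))"
      by (rule has_sum_cong[THEN iffD1, rotated]) (auto simp: factor)
    moreover have "(\<Prod>p | prime p \<and> p \<le> ?q. E p) = E ?q * (\<Prod>p | prime p \<and> p \<le> B. E p)"
      unfolding primes by simp
    ultimately show ?thesis
      using has_sum_reindex_bij_betw[OF bij, of "?F ?q"] by simp
  qed
qed

lemma prod_prime_factors_eq_prod_primes_le:
  fixes h :: "nat \<Rightarrow> nat \<Rightarrow> nat \<Rightarrow> 'a :: comm_monoid_mult"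
  assumes "N > 0" "N \<le> B" "i \<in> smooth_numbers B" "j \<in> smooth_numbers B"
    and unit: "\<And>p. prime p \<Longrightarrow> \<not> p dvd N \<Longrightarrow> h p 0 0 = 1"
  shows "(\<Prod>p\<in>prime_factors (N * i * j). h p (multiplicity p i) (multiplicity p j))
           = (\<Prod>p | prime p \<and> p \<le> B. h p (multiplicity p i) (multiplicity p j))"
proof -
  have "i > 0" "j > 0"
    using assms(3,4) by (auto simp: smooth_numbers_def)
  then have pf: "prime_factors (N * i * j) = prime_factors N \<union> prime_factors i \<union> prime_factors j"
    using \<open>N > 0\<close> by (simp add: prime_factors_product)
  have "prime_factors N \<subseteq> {..B}"
    using \<open>N > 0\<close> \<open>N \<le> B\<close> by (auto simp: prime_factors_dvd dest!: dvd_imp_le)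
  then have "prime_factors (N * i * j) \<subseteq> {p. prime p \<and> p \<le> B}"
    using assms(3,4) unfolding pf by (auto simp: smooth_numbers_def)
  moreover have "h p (multiplicity p i) (multiplicity p j) = 1"
    if "p \<in> {p. prime p \<and> p \<le> B} - prime_factors (N * i * j)" for p
    using that unit[of p] \<open>N > 0\<close> \<open>i > 0\<close> \<open>j > 0\<close> unfolding pf
    by (auto simp: in_prime_factors_iff not_dvd_imp_multiplicity_0)
  ultimately show ?thesis
    by (intro prod.mono_neutral_left) auto
qed

lemma summable_euler_product_pairs:
  fixes h :: "nat \<Rightarrow> nat \<Rightarrow> nat \<Rightarrow> real" and u :: "nat \<Rightarrow> real"
  assumes "N > 0"
    and local_sum: "\<And>p. prime p \<Longrightarrow> (\<lambda>(a, b). h p a b) summable_on UNIV"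
    and unit: "\<And>p. prime p \<Longrightarrow> \<not> p dvd N \<Longrightarrow> h p 0 0 = 1"
    and abs_bound: "\<And>p. prime p \<Longrightarrow> (\<Sum>\<^sub>\<infinity>(a, b). \<bar>h p a b\<bar>) \<le> 1 + u p"
    and u: "summable u" "\<And>k. u k \<ge> 0"
  shows "(\<lambda>(i, j). \<Prod>p\<in>prime_factors (N * i * j). h p (multiplicity p i) (multiplicity p j))
           summable_on {(i, j). i > 0 \<and> j > 0}"
proof -
  define F where "F = (\<lambda>(i, j). \<Prod>p\<in>prime_factors (N * i * j). h p (multiplicity p i) (multiplicity p j))"
  define D where "D = {(i :: nat, j :: nat). i > 0 \<and> j > 0}"
  define E_abs where "E_abs p = (\<Sum>\<^sub>\<infinity>(a, b). \<bar>h p a b\<bar>)" for p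
  have abs_local_sum: "((\<lambda>(a, b). \<bar>h p a b\<bar>) has_sum E_abs p) UNIV" if "prime p" for p
    using local_sum[OF that] summable_on_iff_abs_summable_on_real[of "\<lambda>(a, b). h p a b"]
    unfolding E_abs_def by (simp add: case_prod_beta')
  have "(\<lambda>x. \<bar>F x\<bar>) summable_on D"
  proof (rule nonneg_bdd_above_summable_on)
    show "bdd_above (sum (\<lambda>x. \<bar>F x\<bar>) ` {X. X \<subseteq> D \<and> finite X})"
    proof (rule bdd_aboveI2)
      fix X assume X: "X \<in> {X. X \<subseteq> D \<and> finite X}"
      then have "eventually (\<lambda>B. N \<le> B \<and> X \<subseteq> smooth_numbers B \<times> smooth_numbers B) sequentially"
        unfolding D_def by (intro eventually_conj eventually_ge_at_top eventually_subset_smooth_pairs) auto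
      then obtain B where "\<forall>B'\<ge>B. N \<le> B' \<and> X \<subseteq> smooth_numbers B' \<times> smooth_numbers B'"
        unfolding eventually_sequentially by blast
      then have B: "N \<le> B" "X \<subseteq> smooth_numbers B \<times> smooth_numbers B"
        by simp_all
      have "((\<lambda>(i, j). \<Prod>p | prime p \<and> p \<le> B. \<bar>h p (multiplicity p i) (multiplicity p j)\<bar>)
              has_sum (\<Prod>p | prime p \<and> p \<le> B. E_abs p)) (smooth_numbers B \<times> smooth_numbers B)"
        using abs_local_sum by (rule has_sum_euler_product_smooth)
      then have "((\<lambda>x. \<bar>F x\<bar>) has_sum (\<Prod>p | prime p \<and> p \<le> B. E_abs p))
                   (smooth_numbers B \<times> smooth_numbers B)"
        by (rule has_sum_cong[THEN iffD1, rotated])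
          (use \<open>N > 0\<close> B(1) unit in \<open>auto simp: F_def abs_prod prod_prime_factors_eq_prod_primes_le\<close>)
      then have "(\<Sum>x\<in>X. \<bar>F x\<bar>) \<le> (\<Prod>p | prime p \<and> p \<le> B. E_abs p)"
        using B X by (intro finite_sum_le_has_sum) auto
      also have "\<dots> \<le> exp (suminf u)"
        using abs_bound u unfolding E_abs_def
        by (intro prod_le_exp_suminf conjI infsum_nonneg) auto
      finally show "(\<Sum>x\<in>X. \<bar>F x\<bar>) \<le> exp (suminf u)" .
    qed
  qed simp
  then show ?thesis
    unfolding F_def D_def by (subst summable_on_iff_abs_summable_on_real) simp
qed

text \<open>
  At the primes dividing N the local factor need not satisfy h p 0 0 = 1, so the product over
  the prime factors of N i j is the whole Euler product of the pair (i, j).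
\<close>

lemma euler_product_pairs:
  fixes h :: "nat \<Rightarrow> nat \<Rightarrow> nat \<Rightarrow> real" and u :: "nat \<Rightarrow> real"
  assumes "N > 0"
    and local_sum: "\<And>p. prime p \<Longrightarrow> ((\<lambda>(a, b). h p a b) has_sum E p) UNIV"
    and unit: "\<And>p. prime p \<Longrightarrow> \<not> p dvd N \<Longrightarrow> h p 0 0 = 1"
    and abs_bound: "\<And>p. prime p \<Longrightarrow> (\<Sum>\<^sub>\<infinity>(a, b). \<bar>h p a b\<bar>) \<le> 1 + u p"
    and u: "summable u" "\<And>k. u k \<ge> 0"
    and lim: "(\<lambda>B. \<Prod>p | prime p \<and> p \<le> B. E p) \<longlonglongrightarrow> L"
  shows "((\<lambda>(i, j). \<Prod>p\<in>prime_factors (N * i * j). h p (multiplicity p i) (multiplicity p j))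
           has_sum L) {(i, j). i > 0 \<and> j > 0}"
proof -
  define F where "F = (\<lambda>(i, j). \<Prod>p\<in>prime_factors (N * i * j). h p (multiplicity p i) (multiplicity p j))"
  define D where "D = {(i :: nat, j :: nat). i > 0 \<and> j > 0}"
  define S where "S B = smooth_numbers B \<times> smooth_numbers B" for B
  have summable: "F summable_on D"
    unfolding F_def D_def using assms(1) _ unit abs_bound u
    by (rule summable_euler_product_pairs) (use local_sum in \<open>auto simp: summable_on_def\<close>)
  have partial: "(F has_sum (\<Prod>p | prime p \<and> p \<le> B. E p)) (S B)" if "N \<le> B" for B
  proof -
    have "((\<lambda>(i, j). \<Prod>p | prime p \<and> p \<le> B. h p (multiplicity p i) (multiplicity p j))
            has_sum (\<Prod>p | prime p \<and> p \<le> B. E p)) (S B)"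
      unfolding S_def by (intro has_sum_euler_product_smooth local_sum)
    then show ?thesis
      by (rule has_sum_cong[THEN iffD1, rotated])
        (use \<open>N > 0\<close> that unit in \<open>auto simp: S_def F_def prod_prime_factors_eq_prod_primes_le\<close>)
  qed
  have "(\<lambda>B. infsum F (S B)) \<longlonglongrightarrow> infsum F D"
  proof (rule tendsto_infsum_exhaustion[OF summable])
    show "mono S"
      using smooth_numbers_mono unfolding S_def mono_def by blast
    show "S B \<subseteq> D" for B
      by (auto simp: S_def D_def smooth_numbers_def)
    show "\<exists>B. x \<in> S B" if x: "x \<in> D" for x
    proof -
      obtain i j where "x = (i, j)" "i > 0" "j > 0"
        using x by (auto simp: D_def)
      then show ?thesis
        unfolding S_def by (intro exI[of _ "i + j"]) (simp add: mem_smooth_numbers)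
    qed
  qed
  moreover have "eventually (\<lambda>B. infsum F (S B) = (\<Prod>p | prime p \<and> p \<le> B. E p)) sequentially"
    using eventually_ge_at_top[of N] by eventually_elim (rule infsumI[OF partial])
  ultimately have "(\<lambda>B. \<Prod>p | prime p \<and> p \<le> B. E p) \<longlonglongrightarrow> infsum F D"
    by (rule Lim_transform_eventually)
  then have "L = infsum F D"
    by (rule LIMSEQ_unique[OF lim])
  with summable show ?thesis
    unfolding F_def D_def by simp
qed

section \<open>Multiplicativity of the summand\<close>

lemma moebius_mu_prime_power:
  assumes "prime p"
  shows "moebius_mu (p ^ b) = (if b = 0 then 1 else if b = 1 then -1 else 0)"
proof -
  have "squarefree p" "\<not> is_unit p"
    using assms by (auto simp: squarefree_prime)
  moreover have "prime_factors p = {p}"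
    using assms by (simp add: prime_prime_factors)
  ultimately show ?thesis
    using assms by (auto simp: moebius_mu_def squarefree_power_iff prime_gt_0_nat)
qed

lemma prod_prime_factors_multiplicity_dvd:
  fixes k M :: nat
  assumes "k dvd M" "M > 0"
  shows "(\<Prod>p\<in>prime_factors M. p ^ multiplicity p k) = k"
proof -
  have "k > 0" using assms by (auto intro: gr0I)
  have "(\<Prod>p\<in>prime_factors M. p ^ multiplicity p k) = (\<Prod>p\<in>prime_factors k. p ^ multiplicity p k)"
    using assms \<open>k > 0\<close> by (intro prod.mono_neutral_right dvd_prime_factors)
      (auto simp: in_prime_factors_iff not_dvd_imp_multiplicity_0)
  also have "\<dots> = k"
    using prime_factorization_nat[OF \<open>k > 0\<close>] by simp
  finally show ?thesis .
qed

lemma prod_prime_factors_totient_dvd: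
  fixes k M :: nat
  assumes "k dvd M" "M > 0"
  shows "(\<Prod>p\<in>prime_factors M. totient (p ^ multiplicity p k)) = totient k"
proof -
  have "k > 0" using assms by (auto intro: gr0I)
  have "(\<Prod>p\<in>prime_factors M. totient (p ^ multiplicity p k))
          = (\<Prod>p\<in>prime_factors k. totient (p ^ multiplicity p k))"
    using assms \<open>k > 0\<close> by (intro prod.mono_neutral_right dvd_prime_factors)
      (auto simp: in_prime_factors_iff not_dvd_imp_multiplicity_0)
  also have "\<dots> = totient k"
    using \<open>k > 0\<close> by (simp add: totient_formula1 totient_prime_power prime_factors_multiplicity)
  finally show ?thesis .
qed

lemma prod_prime_factors_moebius_mu_dvd:
  fixes k M :: nat
  assumes "k dvd M" "M > 0"
  shows "(\<Prod>p\<in>prime_factors M. moebius_mu (p ^ multiplicity p k)) = moebius_mu k"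
proof -
  have "k > 0" using assms by (auto intro: gr0I)
  have pf: "prime_factors k \<subseteq> prime_factors M"
    using assms \<open>k > 0\<close> by (intro dvd_prime_factors) auto
  show ?thesis
  proof (cases "squarefree k")
    case True
    then have mult_1: "multiplicity p k = 1" if "p \<in> prime_factors k" for p
      using that \<open>k > 0\<close> by (simp add: squarefree_factorial_semiring')
    have "(\<Prod>p\<in>prime_factors M. moebius_mu (p ^ multiplicity p k))
            = (\<Prod>p\<in>prime_factors k. moebius_mu (p ^ multiplicity p k))"
      using pf by (intro prod.mono_neutral_right)
        (auto simp: in_prime_factors_iff not_dvd_imp_multiplicity_0 moebius_mu_def)
    also have "\<dots> = (\<Prod>p\<in>prime_factors k. -1)"
      using mult_1 moebius_mu_prime_power[of _ 1] by (intro prod.cong) auto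
    also have "\<dots> = moebius_mu k"
      using True \<open>k > 0\<close> by (simp add: moebius_mu_def)
    finally show ?thesis .
  next
    case False
    then obtain p where p: "prime p" "multiplicity p k > 1"
      using \<open>k > 0\<close> by (auto simp: squarefree_factorial_semiring'' not_le)
    then have "p \<in> prime_factors M"
      using pf by (auto simp: prime_factors_multiplicity)
    then have "(\<Prod>p\<in>prime_factors M. moebius_mu (p ^ multiplicity p k)) = 0"
      using p moebius_mu_prime_power[of p "multiplicity p k"] by (intro prod_zero bexI[of _ p]) auto
    then show ?thesis
      using False by (simp add: moebius_mu_def)
  qed
qed

definition series_term :: "nat \<Rightarrow> nat \<Rightarrow> real" where
  "series_term i j = moebius_mu j / (real i ^ 2 * real j * real (totient (i * j)))"

lemma series_term_multiplicative:
  assumes "i > 0" "j > 0" "i * j dvd M" "M > 0"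
  shows "series_term i j = (\<Prod>p\<in>prime_factors M. series_term (p ^ multiplicity p i) (p ^ multiplicity p j))"
proof -
  have dvd: "i dvd M" "j dvd M"
    using assms(3) dvd_mult_left dvd_mult_right by blast+
  have "(\<Prod>p\<in>prime_factors M. series_term (p ^ multiplicity p i) (p ^ multiplicity p j))
      = (\<Prod>p\<in>prime_factors M. moebius_mu (p ^ multiplicity p j) /
           (real (p ^ multiplicity p i) ^ 2 * real (p ^ multiplicity p j)
             * real (totient (p ^ multiplicity p (i * j)))))"
    using assms(1,2)
    by (intro prod.cong refl)
      (auto simp: series_term_def power_add prime_elem_multiplicity_mult_distrib in_prime_factors_iff)
  also have "\<dots> = (\<Prod>p\<in>prime_factors M. moebius_mu (p ^ multiplicity p j)) /
      (real (\<Prod>p\<in>prime_factors M. p ^ multiplicity p i) ^ 2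
        * real (\<Prod>p\<in>prime_factors M. p ^ multiplicity p j)
        * real (\<Prod>p\<in>prime_factors M. totient (p ^ multiplicity p (i * j))))"
    by (simp add: prod_dividef prod.distrib prod_power_distrib)
  also have "\<dots> = series_term i j"
    using assms dvd
    by (simp add: series_term_def prod_prime_factors_multiplicity_dvd prod_prime_factors_totient_dvd
      prod_prime_factors_moebius_mu_dvd)
  finally show ?thesis ..
qed

definition local_factor :: "nat \<Rightarrow> nat \<Rightarrow> nat \<Rightarrow> nat \<Rightarrow> nat \<Rightarrow> real" where
  "local_factor m n p a b =
     (if multiplicity p m \<le> a \<and> multiplicity p (m * n) \<le> a + b then series_term (p ^ a) (p ^ b) else 0)"

lemma restricted_series_term_multiplicative:
  assumes "m > 0" "n > 0" "i > 0" "j > 0"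
  shows "(if m dvd i \<and> m * n dvd i * j then series_term i j else 0)
           = (\<Prod>p\<in>prime_factors (m * n * i * j). local_factor m n p (multiplicity p i) (multiplicity p j))"
proof -
  have mult_ij: "multiplicity p (i * j) = multiplicity p i + multiplicity p j" if "prime p" for p
    using that assms by (simp add: prime_elem_multiplicity_mult_distrib)
  have dvd_iff: "m dvd i \<and> m * n dvd i * j \<longleftrightarrow> (\<forall>p. prime p \<longrightarrow>
      multiplicity p m \<le> multiplicity p i \<and> multiplicity p (m * n) \<le> multiplicity p i + multiplicity p j)"
    using assms by (auto simp: prime_multiplicity_le_imp_dvd mult_ij)
  show ?thesis
  proof (cases "m dvd i \<and> m * n dvd i * j")
    case True
    then have "local_factor m n p (multiplicity p i) (multiplicity p j)
                 = series_term (p ^ multiplicity p i) (p ^ multiplicity p j)"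
      if "p \<in> prime_factors (m * n * i * j)" for p
      using that dvd_iff by (auto simp: local_factor_def)
    then show ?thesis
      using True assms series_term_multiplicative[of i j "m * n * i * j"] by (simp cong: prod.cong)
  next
    case False
    then obtain p where p: "prime p" "\<not> (multiplicity p m \<le> multiplicity p i
        \<and> multiplicity p (m * n) \<le> multiplicity p i + multiplicity p j)"
      using dvd_iff by blast
    then have "multiplicity p (m * n) > 0"
      using dvd_imp_multiplicity_le[of m "m * n" p] assms by auto
    then have "p \<in> prime_factors (m * n * i * j)"
      using p(1) assms by (auto simp: prime_factors_multiplicity prime_elem_multiplicity_mult_distrib)
    then have "(\<Prod>p\<in>prime_factors (m * n * i * j). local_factor m n p (multiplicity p i) (multiplicity p j)) = 0"
      using p by (intro prod_zero bexI[of _ p]) (auto simp: local_factor_def)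
    then show ?thesis
      by (simp only: if_not_P[OF False])
  qed
qed

section \<open>The local factors\<close>

lemma four_mult_le_cube:
  fixes P :: real
  assumes "P \<ge> 2"
  shows "4 * P \<le> P ^ 3"
proof -
  have "2 * 2 \<le> P * P"
    using assms by (intro mult_mono) auto
  then show ?thesis
    using assms mult_right_mono[of 4 "P * P" P] by (simp add: power3_eq_cube)
qed

lemma series_term_prime_power_0:
  assumes "prime p" "a > 0"
  shows "series_term (p ^ a) 1 = real p / (real p - 1) * (1 / real p ^ 3) ^ a"
proof -
  obtain k where a: "a = Suc k"
    using assms(2) gr0_implies_Suc by blast
  have P: "real p > 1"
    using prime_gt_1_nat[OF assms(1)] by simp
  have "real (totient (p ^ a)) = real p ^ k * (real p - 1)"
    using totient_prime_power_Suc[OF assms(1), of k] prime_gt_0_nat[OF assms(1)]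
    by (simp add: a)
  then have "series_term (p ^ a) 1 = 1 / ((real p * real p ^ k) ^ 2 * (real p ^ k * (real p - 1)))"
    by (simp add: series_term_def moebius_mu_def a)
  also have "\<dots> = real p / (real p - 1) * (1 / (real p * real p ^ k) ^ 3)"
  proof -
    have "1 / ((real p * y) ^ 2 * (y * (real p - 1))) = real p / (real p - 1) * (1 / (real p * y) ^ 3)"
      if "y > 0" for y :: real
      using P that by (simp add: divide_simps power2_eq_square power3_eq_cube)
    then show ?thesis
      using P by simp
  qed
  also have "\<dots> = real p / (real p - 1) * (1 / real p ^ 3) ^ a"
    by (simp add: a power_one_over power_mult_distrib flip: power_mult) (simp add: mult.commute)
  finally show ?thesis .
qed

lemma series_term_prime_power_1:
  assumes "prime p"
  shows "series_term (p ^ a) p = - (1 / (real p * (real p - 1))) * (1 / real p ^ 3) ^ a"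
proof -
  have P: "real p > 1"
    using prime_gt_1_nat[OF assms(1)] by simp
  have "real (totient (p ^ a * p)) = real p ^ a * (real p - 1)"
    using totient_prime_power_Suc[OF assms(1), of a] prime_gt_0_nat[OF assms(1)]
    by (simp add: mult.commute)
  moreover have "moebius_mu p = -1"
    using moebius_mu_prime_power[OF assms, of 1] by simp
  ultimately have "series_term (p ^ a) p = -1 / ((real p ^ a) ^ 2 * real p * (real p ^ a * (real p - 1)))"
    by (simp add: series_term_def)
  also have "\<dots> = - (1 / (real p * (real p - 1))) * (1 / (real p ^ a) ^ 3)"
  proof -
    have "-1 / (y ^ 2 * real p * (y * (real p - 1))) = - (1 / (real p * (real p - 1))) * (1 / y ^ 3)"
      if "y > 0" for y :: real
      using P that by (simp add: divide_simps power2_eq_square power3_eq_cube)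
    then show ?thesis
      using P by simp
  qed
  also have "\<dots> = - (1 / (real p * (real p - 1))) * (1 / real p ^ 3) ^ a"
    by (simp add: power_one_over flip: power_mult) (simp add: mult.commute)
  finally show ?thesis .
qed

lemma series_term_prime_power_ge_2:
  assumes "prime p" "b \<ge> 2"
  shows "series_term (p ^ a) (p ^ b) = 0"
  using assms by (simp add: series_term_def moebius_mu_prime_power)

lemma has_sum_series_term_row_0:
  assumes "prime p" "c > 0"
  shows "((\<lambda>a. series_term (p ^ a) 1) has_sum
           real p / (real p - 1) * ((1 / real p ^ 3) ^ c / (1 - 1 / real p ^ 3))) {c..}"
proof -
  have "\<bar>1 / real p ^ 3\<bar> < 1"
    using prime_gt_1_nat[OF assms(1)] by (simp add: power_gt1)
  from has_sum_cmult_right[OF has_sum_geometric_from[OF this, of c], of "real p / (real p - 1)"]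
  show ?thesis
    by (rule has_sum_cong[THEN iffD1, rotated]) (use assms series_term_prime_power_0 in auto)
qed

lemma has_sum_series_term_row_1:
  assumes "prime p"
  shows "((\<lambda>a. series_term (p ^ a) p) has_sum
           - (1 / (real p * (real p - 1))) * ((1 / real p ^ 3) ^ c / (1 - 1 / real p ^ 3))) {c..}"
proof -
  have "\<bar>1 / real p ^ 3\<bar> < 1"
    using prime_gt_1_nat[OF assms(1)] by (simp add: power_gt1)
  from has_sum_cmult_right[OF has_sum_geometric_from[OF this, of c], of "- (1 / (real p * (real p - 1)))"]
  show ?thesis
    by (rule has_sum_cong[THEN iffD1, rotated]) (use assms in \<open>simp add: series_term_prime_power_1\<close>)
qed

lemma has_sum_series_term_row_0_UNIV:
  assumes "prime p"
  shows "((\<lambda>a. series_term (p ^ a) 1) has_sum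
           1 + real p / (real p - 1) * ((1 / real p ^ 3) / (1 - 1 / real p ^ 3))) UNIV"
proof -
  have "((\<lambda>a. series_term (p ^ a) 1) has_sum
          1 + real p / (real p - 1) * ((1 / real p ^ 3) ^ 1 / (1 - 1 / real p ^ 3))) ({0} \<union> {1..})"
    using assms by (intro has_sum_Un_disjoint has_sum_series_term_row_0)
      (auto simp: series_term_def moebius_mu_def intro: has_sum_finiteI)
  moreover have "{0} \<union> {1 :: nat..} = UNIV"
    by auto
  ultimately show ?thesis
    by simp
qed

definition S_factor :: "nat \<Rightarrow> real" where
  "S_factor k = (if prime k then 1 - real k / (real k ^ 3 - 1) else 1)"

definition correction :: "nat \<Rightarrow> nat \<Rightarrow> nat \<Rightarrow> real" where
  "correction m n p = (1 / real p ^ 3) ^ multiplicity p (m * n) *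
     (if p dvd n then - (real p ^ 4) / (real p ^ 3 - real p - 1)
      else if p dvd m then (real p ^ 3 + real p ^ 2) / (real p ^ 3 - real p - 1)
      else 1)"

lemma local_sum_eq_coprime:
  fixes P :: real
  assumes "P \<ge> 2"
  shows "1 + P / (P - 1) * ((1 / P ^ 3) / (1 - 1 / P ^ 3))
           + - (1 / (P * (P - 1))) * ((1 / P ^ 3) ^ 0 / (1 - 1 / P ^ 3))
         = 1 - P / (P ^ 3 - 1)"
proof -
  have "P ^ 3 - 1 \<noteq> 0" "P - 1 \<noteq> 0" "P \<noteq> 0" "P ^ 3 \<noteq> 0"
    using four_mult_le_cube[OF assms] assms by auto
  then show ?thesis
    by (simp add: divide_simps) (simp add: algebra_simps power2_eq_square power3_eq_cube power4_eq_xxxx)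
qed

lemma local_sum_eq_dvd_m:
  fixes P :: real
  assumes "P \<ge> 2"
  shows "P / (P - 1) * (w / (1 - 1 / P ^ 3)) + - (1 / (P * (P - 1))) * (w / (1 - 1 / P ^ 3))
       = (1 - P / (P ^ 3 - 1)) * (w * ((P ^ 3 + P ^ 2) / (P ^ 3 - P - 1)))"
proof -
  have "P ^ 3 - 1 \<noteq> 0" "P ^ 3 - P - 1 \<noteq> 0" "P - 1 \<noteq> 0" "P \<noteq> 0" "P ^ 3 \<noteq> 0"
    using four_mult_le_cube[OF assms] assms by auto
  then show ?thesis
    by (simp add: divide_simps) (simp add: algebra_simps power2_eq_square power3_eq_cube power4_eq_xxxx)
qed

lemma local_sum_eq_dvd_n:
  fixes P :: real
  assumes "P \<ge> 2"
  shows "P / (P - 1) * (w * (1 / P ^ 3) / (1 - 1 / P ^ 3)) + - (1 / (P * (P - 1))) * (w / (1 - 1 / P ^ 3))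
       = (1 - P / (P ^ 3 - 1)) * (w * (1 / P ^ 3) * (- (P ^ 4) / (P ^ 3 - P - 1)))"
proof -
  have "P ^ 3 - 1 \<noteq> 0" "P ^ 3 - P - 1 \<noteq> 0" "P - 1 \<noteq> 0" "P \<noteq> 0" "P ^ 3 \<noteq> 0"
    using four_mult_le_cube[OF assms] assms by auto
  then show ?thesis
    by (simp add: divide_simps) (simp add: algebra_simps power2_eq_square power3_eq_cube power4_eq_xxxx)
qed

lemma has_sum_local_factor_rows:
  assumes "m > 0" "n > 0" "prime p"
  defines "x \<equiv> 1 / real p ^ 3" and "c \<equiv> multiplicity p (m * n)"
  shows "((\<lambda>(a, b). local_factor m n p a b) has_sum
           (if c = 0 then 1 + real p / (real p - 1) * (x / (1 - x)) else real p / (real p - 1) * (x ^ c / (1 - x)))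
           + - (1 / (real p * (real p - 1))) * (x ^ max (multiplicity p m) (c - 1) / (1 - x))) UNIV"
proof (rule has_sum_two_rows)
  show "local_factor m n p a b = 0" if "b \<ge> 2" for a b
    using assms(3) that by (simp add: local_factor_def series_term_prime_power_ge_2)
  have "multiplicity p m \<le> c"
    using assms(1,2) unfolding c_def by (intro dvd_imp_multiplicity_le) auto
  then have row_0: "(\<lambda>a. local_factor m n p a 0) = (\<lambda>a. if c \<le> a then series_term (p ^ a) 1 else 0)"
    by (auto simp: local_factor_def c_def)
  show "((\<lambda>a. local_factor m n p a 0) has_sum
      (if c = 0 then 1 + real p / (real p - 1) * (x / (1 - x)) else real p / (real p - 1) * (x ^ c / (1 - x)))) UNIV"
    unfolding row_0 x_def
    using has_sum_series_term_row_0_UNIV[OF assms(3)] has_sum_series_term_row_0[OF assms(3), of c]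
    by (auto intro: has_sum_extend_zero_from)
  have "(\<lambda>a. local_factor m n p a 1)
      = (\<lambda>a. if max (multiplicity p m) (c - 1) \<le> a then series_term (p ^ a) p else 0)"
    by (intro ext) (auto simp: local_factor_def c_def)
  then show "((\<lambda>a. local_factor m n p a 1) has_sum
      - (1 / (real p * (real p - 1))) * (x ^ max (multiplicity p m) (c - 1) / (1 - x))) UNIV"
    unfolding x_def by (simp only:) (intro has_sum_extend_zero_from has_sum_series_term_row_1 assms(3))
qed

lemma local_sum_eq_S_factor_correction:
  assumes "m > 0" "n > 0" "prime p"
  defines "x \<equiv> 1 / real p ^ 3" and "c \<equiv> multiplicity p (m * n)"
  shows "(if c = 0 then 1 + real p / (real p - 1) * (x / (1 - x)) else real p / (real p - 1) * (x ^ c / (1 - x)))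
           + - (1 / (real p * (real p - 1))) * (x ^ max (multiplicity p m) (c - 1) / (1 - x))
         = S_factor p * correction m n p"
proof -
  have P: "real p \<ge> 2"
    using prime_ge_2_nat[OF assms(3)] by simp
  have c: "c = multiplicity p m + multiplicity p n"
    using assms(1-3) by (simp add: c_def prime_elem_multiplicity_mult_distrib)
  have S: "S_factor p = 1 - real p / (real p ^ 3 - 1)"
    using assms(3) by (simp add: S_factor_def)
  have dvd_iff: "p dvd m \<longleftrightarrow> multiplicity p m > 0" "p dvd n \<longleftrightarrow> multiplicity p n > 0"
    using assms(1-3) prime_multiplicity_gt_zero_iff by auto
  consider "c = 0" | "c > 0" "\<not> p dvd n" | "p dvd n"
    by blast
  then show ?thesis
  proof cases
    case 1
    then show ?thesis
      using local_sum_eq_coprime[OF P] c dvd_iff by (simp add: S correction_def x_def c_def)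
  next
    case 2
    then show ?thesis
      using local_sum_eq_dvd_m[OF P, of "x ^ c"] c dvd_iff by (simp add: S correction_def x_def c_def)
  next
    case 3
    then have "c > 0" "max (multiplicity p m) (c - 1) = c - 1" and x_c: "x ^ c = x ^ (c - 1) * x"
      using c dvd_iff by (auto simp flip: power_Suc2)
    then show ?thesis
      using local_sum_eq_dvd_n[OF P, of "x ^ (c - 1)", folded x_def] 3
      by (simp add: S correction_def x_c flip: c_def x_def)
  qed
qed

lemma has_sum_local_factor:
  assumes "m > 0" "n > 0" "prime p"
  shows "((\<lambda>(a, b). local_factor m n p a b) has_sum (S_factor p * correction m n p)) UNIV"
  using has_sum_local_factor_rows[OF assms] local_sum_eq_S_factor_correction[OF assms] by simp

lemma local_factor_0_0:
  assumes "prime p" "\<not> p dvd m * n"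
  shows "local_factor m n p 0 0 = 1"
proof -
  have "\<not> p dvd m"
    using assms(2) by (meson dvd_mult2)
  then show ?thesis
    using assms by (simp add: local_factor_def series_term_def moebius_mu_def not_dvd_imp_multiplicity_0)
qed

lemma abs_local_sum_le:
  fixes P :: real
  assumes "P \<ge> 2"
  shows "1 + P / (P - 1) * ((1 / P ^ 3) / (1 - 1 / P ^ 3))
           + 1 / (P * (P - 1)) * ((1 / P ^ 3) ^ 0 / (1 - 1 / P ^ 3)) \<le> 1 + 4 / P ^ 2"
proof -
  have cube: "4 * P \<le> P ^ 3"
    by (rule four_mult_le_cube[OF assms])
  have "P ^ 3 - 1 \<noteq> 0" "P - 1 \<noteq> 0" "P \<noteq> 0" "P ^ 3 \<noteq> 0"
    using cube assms by auto
  then have eq: "P / (P - 1) * ((1 / P ^ 3) / (1 - 1 / P ^ 3))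
           + 1 / (P * (P - 1)) * ((1 / P ^ 3) ^ 0 / (1 - 1 / P ^ 3))
         = P ^ 3 * (P + 1) / (P ^ 2 * ((P - 1) * (P ^ 3 - 1)))"
    by (simp add: divide_simps) (simp add: algebra_simps power2_eq_square power3_eq_cube)
  have "P ^ 3 * 1 \<le> P ^ 3 * (3 * P - 5)"
    using assms cube by (intro mult_left_mono) auto
  moreover have "4 * ((P - 1) * (P ^ 3 - 1)) - P ^ 3 * (P + 1) = P ^ 3 * (3 * P - 5) - 4 * P + 4"
    by (simp add: algebra_simps power3_eq_cube)
  ultimately have "P ^ 3 * (P + 1) \<le> 4 * ((P - 1) * (P ^ 3 - 1))"
    using cube by linarith
  moreover have "(P - 1) * (P ^ 3 - 1) > 0"
    using assms cube by simp
  ultimately have "P ^ 3 * (P + 1) / (P ^ 2 * ((P - 1) * (P ^ 3 - 1))) \<le> 4 / P ^ 2"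
    using assms by (simp add: divide_simps mult.commute)
  then show ?thesis
    unfolding add.assoc eq by simp
qed

lemma infsum_abs_local_factor_le:
  assumes "m > 0" "n > 0" "prime p"
  shows "(\<Sum>\<^sub>\<infinity>(a, b). \<bar>local_factor m n p a b\<bar>) \<le> 1 + 4 / real p ^ 2"
proof -
  let ?x = "1 / real p ^ 3"
  have row_0: "((\<lambda>a. \<bar>series_term (p ^ a) 1\<bar>) has_sum
      1 + real p / (real p - 1) * (?x / (1 - ?x))) UNIV"
    using has_sum_series_term_row_0_UNIV[OF assms(3)] by (simp add: series_term_def moebius_mu_def)
  have "((\<lambda>a. - series_term (p ^ a) p) has_sum
      - (- (1 / (real p * (real p - 1))) * (?x ^ 0 / (1 - ?x)))) {0..}"
    by (rule has_sum_uminusI[OF has_sum_series_term_row_1[OF assms(3)]])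
  then have row_1: "((\<lambda>a. \<bar>series_term (p ^ a) (p ^ 1)\<bar>) has_sum
      1 / (real p * (real p - 1)) * (?x ^ 0 / (1 - ?x))) UNIV"
    using moebius_mu_prime_power[OF assms(3), of 1] by (simp add: series_term_def)
  have vanish: "\<bar>series_term (p ^ a) (p ^ b)\<bar> = 0" if "b \<ge> 2" for a b
    using series_term_prime_power_ge_2[OF assms(3) that] by simp
  have total: "((\<lambda>(a, b). \<bar>series_term (p ^ a) (p ^ b)\<bar>) has_sum
      1 + real p / (real p - 1) * (?x / (1 - ?x)) + 1 / (real p * (real p - 1)) * (?x ^ 0 / (1 - ?x))) UNIV"
    using has_sum_two_rows[of "\<lambda>a b. \<bar>series_term (p ^ a) (p ^ b)\<bar>", OF vanish] row_0 row_1 by simp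
  have "(\<lambda>(a, b). local_factor m n p a b) summable_on UNIV"
    using has_sum_local_factor[OF assms] by (auto simp: summable_on_def)
  then have "(\<lambda>(a, b). \<bar>local_factor m n p a b\<bar>) summable_on UNIV"
    using summable_on_iff_abs_summable_on_real by (force simp: case_prod_beta')
  then have "(\<Sum>\<^sub>\<infinity>(a, b). \<bar>local_factor m n p a b\<bar>)
      \<le> (\<Sum>\<^sub>\<infinity>(a, b). \<bar>series_term (p ^ a) (p ^ b)\<bar>)"
    using total by (intro infsum_mono) (auto simp: summable_on_def local_factor_def)
  also have "\<dots> \<le> 1 + 4 / real p ^ 2"
    using infsumI[OF total] abs_local_sum_le[of "real p"] prime_ge_2_nat[OF assms(3)] by simp
  finally show ?thesis .
qed

lemma prod_correction:
  assumes "m > 0" "n > 0" "m * n \<le> B"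
  shows "(\<Prod>p | prime p \<and> p \<le> B. correction m n p) = 1 / (real m ^ 3 * real n ^ 3)
           * (\<Prod>p\<in>prime_factors n. - (real p ^ 4) / (real p ^ 3 - real p - 1))
           * (\<Prod>p\<in>prime_factors m - prime_factors n. (real p ^ 3 + real p ^ 2) / (real p ^ 3 - real p - 1))"
proof -
  define g where "g p = (if p dvd n then - (real p ^ 4) / (real p ^ 3 - real p - 1)
      else if p dvd m then (real p ^ 3 + real p ^ 2) / (real p ^ 3 - real p - 1) else 1)" for p
  have pf: "prime_factors (m * n) = prime_factors n \<union> (prime_factors m - prime_factors n)"
    using assms by (auto simp: prime_factors_product)
  have "(\<Prod>p | prime p \<and> p \<le> B. correction m n p) = (\<Prod>p\<in>prime_factors (m * n). correction m n p)"
  proof (rule prod.mono_neutral_right)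
    show "prime_factors (m * n) \<subseteq> {p. prime p \<and> p \<le> B}"
      using assms by (auto simp: in_prime_factors_iff dest!: dvd_imp_le)
    show "\<forall>p\<in>{p. prime p \<and> p \<le> B} - prime_factors (m * n). correction m n p = 1"
      using assms by (auto simp: correction_def in_prime_factors_iff not_dvd_imp_multiplicity_0 dest: dvd_mult2)
  qed simp
  also have "\<dots> = (\<Prod>p\<in>prime_factors (m * n). (1 / real p ^ 3) ^ multiplicity p (m * n)) *
      (\<Prod>p\<in>prime_factors (m * n). g p)"
    by (simp add: correction_def g_def prod.distrib)
  also have "(\<Prod>p\<in>prime_factors (m * n). (1 / real p ^ 3) ^ multiplicity p (m * n)) = 1 / real (m * n) ^ 3"
  proof -
    have "(1 / real p ^ 3) ^ v = 1 / (real p ^ v) ^ 3" for p v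
      by (simp add: power_one_over flip: power_mult) (simp add: mult.commute)
    then have "(\<Prod>p\<in>prime_factors (m * n). (1 / real p ^ 3) ^ multiplicity p (m * n))
        = 1 / (\<Prod>p\<in>prime_factors (m * n). real p ^ multiplicity p (m * n)) ^ 3"
      by (simp add: prod_dividef prod_power_distrib)
    also have "(\<Prod>p\<in>prime_factors (m * n). real p ^ multiplicity p (m * n)) = real (m * n)"
      using arg_cong[OF prod_prime_factors_multiplicity_dvd[of "m * n" "m * n"], of real] assms by simp
    finally show ?thesis .
  qed
  also have "(\<Prod>p\<in>prime_factors (m * n). g p)
      = (\<Prod>p\<in>prime_factors n. g p) * (\<Prod>p\<in>prime_factors m - prime_factors n. g p)"
    unfolding pf by (rule prod.union_disjoint) auto
  also have "(\<Prod>p\<in>prime_factors n. g p) = (\<Prod>p\<in>prime_factors n. - (real p ^ 4) / (real p ^ 3 - real p - 1))"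
    by (intro prod.cong) (auto simp: g_def in_prime_factors_iff)
  also have "(\<Prod>p\<in>prime_factors m - prime_factors n. g p)
      = (\<Prod>p\<in>prime_factors m - prime_factors n. (real p ^ 3 + real p ^ 2) / (real p ^ 3 - real p - 1))"
    using assms by (intro prod.cong) (auto simp: g_def in_prime_factors_iff)
  finally show ?thesis
    by (simp add: power_mult_distrib mult.assoc)
qed

lemma summable_norm_S_factor_minus_1: "summable (\<lambda>k. norm (S_factor k - 1))"
proof (rule summable_comparison_test')
  show "summable (\<lambda>k. 2 * inverse (real k ^ 2))"
    using inverse_power_summable[of 2] by (intro summable_mult) simp
next
  fix k :: nat
  show "norm (norm (S_factor k - 1)) \<le> 2 * inverse (real k ^ 2)"
  proof (cases "prime k")
    case True
    then have K: "real k \<ge> 2"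
      using prime_ge_2_nat by simp
    have "4 * real k \<le> real k ^ 3"
      by (rule four_mult_le_cube[OF K])
    then have "real k ^ 3 - 1 > 0" "real k ^ 3 \<le> 2 * (real k ^ 3 - 1)"
      using K by simp_all
    then have "real k / (real k ^ 3 - 1) \<le> 2 / real k ^ 2"
      using K by (simp add: divide_simps power2_eq_square power3_eq_cube)
    then show ?thesis
      using True \<open>real k ^ 3 - 1 > 0\<close> by (simp add: S_factor_def divide_inverse)
  qed (simp add: S_factor_def)
qed

lemma S_factor_prod_tendsto: "(\<lambda>B. \<Prod>p | prime p \<and> p \<le> B. S_factor p) \<longlonglongrightarrow> S_const"
proof -
  have "convergent_prod S_factor"
    by (intro abs_convergent_prod_imp_convergent_prod summable_imp_abs_convergent_prod
      summable_norm_S_factor_minus_1)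
  then have "(\<lambda>B. \<Prod>k\<le>B. S_factor k) \<longlonglongrightarrow> S_const"
    unfolding S_const_def S_factor_def[abs_def] by (rule convergent_prod_LIMSEQ)
  moreover have "(\<Prod>k\<le>B. S_factor k) = (\<Prod>p | prime p \<and> p \<le> B. S_factor p)" for B
    by (rule prod.mono_neutral_right) (auto simp: S_factor_def)
  ultimately show ?thesis
    by simp
qed

lemma tendsto_prod_local_sums:
  assumes "m > 0" "n > 0"
  shows "(\<lambda>B. \<Prod>p | prime p \<and> p \<le> B. S_factor p * correction m n p) \<longlonglongrightarrow>
           S_const / (real m ^ 3 * real n ^ 3)
           * (\<Prod>p\<in>prime_factors n. - (real p ^ 4) / (real p ^ 3 - real p - 1))
           * (\<Prod>p\<in>prime_factors m - prime_factors n. (real p ^ 3 + real p ^ 2) / (real p ^ 3 - real p - 1))"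
proof -
  define C where "C = 1 / (real m ^ 3 * real n ^ 3)
    * (\<Prod>p\<in>prime_factors n. - (real p ^ 4) / (real p ^ 3 - real p - 1))
    * (\<Prod>p\<in>prime_factors m - prime_factors n. (real p ^ 3 + real p ^ 2) / (real p ^ 3 - real p - 1))"
  have "eventually (\<lambda>B. (\<Prod>p | prime p \<and> p \<le> B. correction m n p) = C) sequentially"
    using eventually_ge_at_top[of "m * n"] by eventually_elim (simp only: C_def prod_correction[OF assms])
  then have "(\<lambda>B. \<Prod>p | prime p \<and> p \<le> B. correction m n p) \<longlonglongrightarrow> C"
    by (rule tendsto_eventually)
  then have "(\<lambda>B. \<Prod>p | prime p \<and> p \<le> B. S_factor p * correction m n p) \<longlonglongrightarrow> S_const * C"
    unfolding prod.distrib by (intro tendsto_mult S_factor_prod_tendsto)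
  then show ?thesis
    by (simp add: C_def mult.assoc)
qed

theorem theorem4p2:
  fixes m n :: nat
  assumes "m > 0" and "n > 0"
  shows "((\<lambda>(i, j). moebius_mu j / (real i ^ 2 * real j * real (totient (i * j))))
          has_sum
          (S_const / (real m ^ 3 * real n ^ 3)
            * (\<Prod>p\<in>prime_factors n. - (real p ^ 4) / (real p ^ 3 - real p - 1))
            * (\<Prod>p\<in>prime_factors m - prime_factors n.
                 (real p ^ 3 + real p ^ 2) / (real p ^ 3 - real p - 1))))
         {(i, j). i \<ge> 1 \<and> j \<ge> 1 \<and> m dvd i \<and> m * n dvd i * j}"
proof -
  have "((\<lambda>(i, j). \<Prod>p\<in>prime_factors (m * n * i * j). local_factor m n p (multiplicity p i) (multiplicity p j))
      has_sum S_const / (real m ^ 3 * real n ^ 3)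
        * (\<Prod>p\<in>prime_factors n. - (real p ^ 4) / (real p ^ 3 - real p - 1))
        * (\<Prod>p\<in>prime_factors m - prime_factors n. (real p ^ 3 + real p ^ 2) / (real p ^ 3 - real p - 1)))
      {(i, j). i > 0 \<and> j > 0}" (is "(_ has_sum ?L) _")
  proof (rule euler_product_pairs[where u = "\<lambda>k. 4 / real k ^ 2", OF _ _ _ _ _ _ tendsto_prod_local_sums[OF assms]])
    show "summable (\<lambda>k. 4 / real k ^ 2)"
      using inverse_power_summable[of 2] by (simp add: divide_inverse summable_mult)
  qed (use assms in \<open>simp_all add: has_sum_local_factor local_factor_0_0 infsum_abs_local_factor_le\<close>)
  then have "((\<lambda>(i, j). if m dvd i \<and> m * n dvd i * j then series_term i j else 0) has_sum ?L)
      {(i, j). i > 0 \<and> j > 0}"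
    by (rule has_sum_cong[THEN iffD1, rotated]) (auto simp: restricted_series_term_multiplicative assms)
  then show ?thesis
    by (rule has_sum_cong_neutral[THEN iffD1, rotated -1]) (auto simp: series_term_def split: if_splits)
qed

end
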